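(* Let $N\ge2$ and $0=x_0<x_1<\dots<x_N=1$, $I=[0,1]$, $I_i=[x_{i-1},x_i]$, $|I_i|=x_i-x_{i-1}$, $L_i(x)=x_{i-1}+|I_i|x$ for $i=1,\dots,N$. Let $\alpha_i,\beta_i,\gamma_i$ be reals with $|\alpha_i|<1$ and $|\beta_i|+|\gamma_i|<1$, let $p_i\in\mathrm{Lip}\,\lambda_i$ and $q_i\in\mathrm{Lip}\,\mu_i$ with $0<\lambda_i,\mu_i\le1$, and let $f_1,f_2:I\to\mathbb{R}$ be continuous with $f_1(L_i(x))=\alpha_if_1(x)+\beta_if_2(x)+p_i(x)$ and $f_2(L_i(x))=\gamma_if_2(x)+q_i(x)$ for all $x\in I$, $i=1,\dots,N$. Put $\lambda=\min_i\lambda_i$, $\mu=\min_i\mu_i$, $\Omega=\max_i |\alpha_i|/|I_i|^{\lambda}$, $\Gamma=\max_i|\gamma_i|/|I_i|^{\mu}$, $\Theta=\max_i|\alpha_i|/|I_i|^{\mu}$, and suppose $\Theta<1$. Then: (a) if $\Omega\ne1$ and $\Gamma\ne1$, there is $\delta\in(0,1]$ with $f_1\in\mathrm{Lip}\,\delta$; (b) if $\Omega=1$ or $\Gamma=1$, there is $\delta\in(0,1]$ with $\omega(f_1,t)=O(|t|^{\delta}\log|t|)$ as $t\to0$.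
   Context: $\mathrm{Lip}\,\delta$ denotes the class of functions $g$ on $I$ such that $|g(x)-g(y)|\le C|x-y|^{\delta}$ for some constant $C$ and all $x,y\in I$. $\omega(f_1,t)=\sup\{|f_1(x)-f_1(y)|: x,y\in I,\ |x-y|\le |t|\}$ is the modulus of continuity. The function $f_1$ is the coalescence hidden variable fractal interpolation function (CHFIF): $(f_1,f_2)$ is the continuous function whose graph is the attractor of the IFS $\omega_i(x,y,z)=(L_i(x),\alpha_iy+\beta_iz+p_i(x),\gamma_iz+q_i(x))$. *)

theory Defs
  imports "HOL-Analysis.Analysis" "HOL-Library.Landau_Symbols"
begin

definition Lip_on_I :: "real \<Rightarrow> (real \<Rightarrow> real) \<Rightarrow> bool" where
  "Lip_on_I \<delta> g \<longleftrightarrow> (\<exists>C. \<forall>x\<in>{0..1}. \<forall>y\<in>{0..1}. \<bar>g x - g y\<bar> \<le> C * \<bar>x - y\<bar> powr \<delta>)"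

definition modcont :: "(real \<Rightarrow> real) \<Rightarrow> real \<Rightarrow> real" where
  "modcont f t = Sup {\<bar>f x - f y\<bar> | x y. x \<in> {0..1} \<and> y \<in> {0..1} \<and> \<bar>x - y\<bar> \<le> \<bar>t\<bar>}"

end

theory Submission
  imports Defs
begin

(*
  A bounded solution f of f (L_i y) = a_i f y + g_i y on [0,1], with the g_i uniformly
  Hoelder of exponent d and |a_i| <= s |I_i|^d for some s < 1, is Hoelder of exponent d.
  For two points of a common interval I_i, the equation transfers a Hoelder bound with
  additive error e on [0,1] to one with error s e on I_i, so after n steps the trivial
  bound 2 sup |f| becomes a Hoelder bound up to the error 2 sup |f| s^n.  Pairs separated
  by a node x_j are estimated through f (x_j); the nodes are images of 0 and 1, the fixed
  points of L_1 and L_N, where the same iteration runs with a single map.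

  Since |alpha_i| < 1 and |gamma_i| < 1, such an s exists for every small enough d, so
  first f_2 and then f_1 is Hoelder continuous.  This gives (a), and (b) as well because
  |t|^d <= |t|^d |ln |t|| near 0.
*)

lemma Lip_on_I_nonneg_const:
  assumes "Lip_on_I d g"
  shows "\<exists>C\<ge>0. \<forall>u\<in>{0..1}. \<forall>v\<in>{0..1}. \<bar>g u - g v\<bar> \<le> C * \<bar>u - v\<bar> powr d"
proof -
  obtain C where C: "\<forall>u\<in>{0..1}. \<forall>v\<in>{0..1}. \<bar>g u - g v\<bar> \<le> C * \<bar>u - v\<bar> powr d"
    using assms unfolding Lip_on_I_def by blast
  have "C \<ge> 0" using C[rule_format, of 0 1] by simp
  with C show ?thesis by blast
qed

lemma Lip_on_I_mono_exponent:
  assumes "Lip_on_I d g" "e \<le> d"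
  shows "Lip_on_I e g"
proof -
  obtain C where "C \<ge> 0" and C: "\<forall>u\<in>{0..1}. \<forall>v\<in>{0..1}. \<bar>g u - g v\<bar> \<le> C * \<bar>u - v\<bar> powr d"
    using Lip_on_I_nonneg_const[OF assms(1)] by blast
  have "\<bar>g u - g v\<bar> \<le> C * \<bar>u - v\<bar> powr e" if "u \<in> {0..1}" "v \<in> {0..1}" for u v
  proof -
    have "\<bar>g u - g v\<bar> \<le> C * \<bar>u - v\<bar> powr d" using C that by blast
    also have "\<dots> \<le> C * \<bar>u - v\<bar> powr e"
      using that \<open>C \<ge> 0\<close> \<open>e \<le> d\<close> by (intro mult_left_mono powr_mono') auto
    finally show ?thesis .
  qed
  then show ?thesis unfolding Lip_on_I_def by blast
qed

lemma Lip_on_I_add: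
  assumes "Lip_on_I d f" "Lip_on_I d g"
  shows "Lip_on_I d (\<lambda>y. f y + g y)"
proof -
  obtain C D where
    C: "\<forall>u\<in>{0..1}. \<forall>v\<in>{0..1}. \<bar>f u - f v\<bar> \<le> C * \<bar>u - v\<bar> powr d" and
    D: "\<forall>u\<in>{0..1}. \<forall>v\<in>{0..1}. \<bar>g u - g v\<bar> \<le> D * \<bar>u - v\<bar> powr d"
    using assms unfolding Lip_on_I_def by blast
  have "\<bar>(f u + g u) - (f v + g v)\<bar> \<le> (C + D) * \<bar>u - v\<bar> powr d"
    if "u \<in> {0..1}" "v \<in> {0..1}" for u v
    using C[rule_format, OF that] D[rule_format, OF that] by (auto simp: distrib_right abs_le_iff)
  then show ?thesis unfolding Lip_on_I_def by blast
qed

lemma Lip_on_I_cmult: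
  assumes "Lip_on_I d f"
  shows "Lip_on_I d (\<lambda>y. c * f y)"
proof -
  obtain C where C: "\<forall>u\<in>{0..1}. \<forall>v\<in>{0..1}. \<bar>f u - f v\<bar> \<le> C * \<bar>u - v\<bar> powr d"
    using assms unfolding Lip_on_I_def by blast
  have "\<bar>c * f u - c * f v\<bar> \<le> (\<bar>c\<bar> * C) * \<bar>u - v\<bar> powr d" if "u \<in> {0..1}" "v \<in> {0..1}" for u v
    using mult_left_mono[OF C[rule_format, OF that], of "\<bar>c\<bar>"]
    by (simp add: abs_mult right_diff_distrib[symmetric] mult.assoc)
  then show ?thesis unfolding Lip_on_I_def by blast
qed

lemma Lip_on_I_uniform_const:
  assumes "finite A" "\<And>i. i \<in> A \<Longrightarrow> Lip_on_I d (g i)"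
  shows "\<exists>K. \<forall>i\<in>A. \<forall>u\<in>{0..1}. \<forall>v\<in>{0..1}. \<bar>g i u - g i v\<bar> \<le> K * \<bar>u - v\<bar> powr d"
proof -
  obtain C where C: "\<forall>i\<in>A. C i \<ge> 0 \<and>
      (\<forall>u\<in>{0..1}. \<forall>v\<in>{0..1}. \<bar>g i u - g i v\<bar> \<le> C i * \<bar>u - v\<bar> powr d)"
    using Lip_on_I_nonneg_const[OF assms(2)] by metis
  have "C i * t \<le> sum C A * t" if "i \<in> A" "0 \<le> t" for i t
    using that C assms(1) by (intro mult_right_mono member_le_sum) auto
  with C have "\<forall>i\<in>A. \<forall>u\<in>{0..1}. \<forall>v\<in>{0..1}. \<bar>g i u - g i v\<bar> \<le> sum C A * \<bar>u - v\<bar> powr d"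
    by (meson order_trans powr_ge_zero)
  then show ?thesis ..
qed

lemma modcont_holder_bounds:
  assumes "0 \<le> C" "0 \<le> d"
    and C: "\<forall>u\<in>{0..1}. \<forall>v\<in>{0..1}. \<bar>f u - f v\<bar> \<le> C * \<bar>u - v\<bar> powr d"
  shows "0 \<le> modcont f t" "modcont f t \<le> C * \<bar>t\<bar> powr d"
proof -
  define S where "S = {\<bar>f u - f v\<bar> | u v. u \<in> {0..1} \<and> v \<in> {0..1} \<and> \<bar>u - v\<bar> \<le> \<bar>t\<bar>}"
  have "0 \<in> S" unfolding S_def by force
  have S_le: "z \<le> C * \<bar>t\<bar> powr d" if z: "z \<in> S" for z
  proof -
    obtain u v where uv: "z = \<bar>f u - f v\<bar>" "u \<in> {0..1}" "v \<in> {0..1}" "\<bar>u - v\<bar> \<le> \<bar>t\<bar>"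
      using z unfolding S_def by blast
    have "z \<le> C * \<bar>u - v\<bar> powr d" using C uv by blast
    also have "\<dots> \<le> C * \<bar>t\<bar> powr d" using uv assms by (intro mult_left_mono powr_mono2) auto
    finally show ?thesis .
  qed
  have "bdd_above S" using S_le by (intro bdd_aboveI) blast
  then show "0 \<le> modcont f t"
    unfolding modcont_def S_def[symmetric] using \<open>0 \<in> S\<close> by (intro cSup_upper)
  show "modcont f t \<le> C * \<bar>t\<bar> powr d"
    unfolding modcont_def S_def[symmetric] using \<open>0 \<in> S\<close> S_le by (intro cSup_least) auto
qed

lemma Lip_on_I_imp_modcont_bigo:
  assumes "Lip_on_I d f" "0 \<le> d"
  shows "modcont f \<in> O[at 0](\<lambda>t. \<bar>t\<bar> powr d * ln \<bar>t\<bar>)"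
proof -
  obtain C where "C \<ge> 0" and C: "\<forall>u\<in>{0..1}. \<forall>v\<in>{0..1}. \<bar>f u - f v\<bar> \<le> C * \<bar>u - v\<bar> powr d"
    using Lip_on_I_nonneg_const[OF assms(1)] by blast
  have "norm (modcont f t) \<le> C * norm (\<bar>t\<bar> powr d * ln \<bar>t\<bar>)"
    if "t \<noteq> 0" "\<bar>t\<bar> < exp (-1)" for t :: real
  proof -
    have "ln \<bar>t\<bar> < ln (exp (-1))" using that by (subst ln_less_cancel_iff) auto
    then have "ln \<bar>t\<bar> < -1" by simp
    then have ln_ge: "\<bar>t\<bar> powr d \<le> \<bar>t\<bar> powr d * \<bar>ln \<bar>t\<bar>\<bar>"
      by (intro mult_le_cancel_left1[THEN iffD2]) auto
    have "norm (modcont f t) \<le> C * \<bar>t\<bar> powr d"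
      using modcont_holder_bounds[OF \<open>C \<ge> 0\<close> assms(2) C, of t] by simp
    also have "\<dots> \<le> C * (\<bar>t\<bar> powr d * \<bar>ln \<bar>t\<bar>\<bar>)"
      using ln_ge \<open>C \<ge> 0\<close> by (rule mult_left_mono)
    finally show ?thesis by (simp add: abs_mult)
  qed
  then have "\<forall>\<^sub>F t in at 0. norm (modcont f t) \<le> C * norm (\<bar>t\<bar> powr d * ln \<bar>t\<bar>)"
    unfolding eventually_at by (intro exI[of _ "exp (-1)"]) (auto simp: dist_real_def)
  then show ?thesis by (rule bigoI)
qed

lemma le_of_forall_le_plus_power:
  fixes X Y c s :: real
  assumes "0 \<le> s" "s < 1" and le: "\<And>n. X \<le> Y + c * s ^ n"
  shows "X \<le> Y"
proof -
  have "(\<lambda>n. Y + c * s ^ n) \<longlonglongrightarrow> Y + c * 0"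
    using assms by (intro tendsto_intros) auto
  then show ?thesis using le by (intro LIMSEQ_le_const) auto
qed

lemma exists_exponent_contraction:
  fixes a r :: "nat \<Rightarrow> real"
  assumes "finite A" and a: "\<And>i. i \<in> A \<Longrightarrow> \<bar>a i\<bar> < 1" and r: "\<And>i. i \<in> A \<Longrightarrow> 0 < r i"
    and "0 < d0"
  shows "\<exists>d s. 0 < d \<and> d \<le> d0 \<and> 0 \<le> s \<and> s < 1 \<and> (\<forall>i\<in>A. \<bar>a i\<bar> \<le> s * r i powr d)"
proof -
  have "\<forall>\<^sub>F d in at_right 0. \<bar>a i\<bar> / r i powr d < 1" if "i \<in> A" for i
  proof (rule order_tendstoD)
    show "((\<lambda>d. \<bar>a i\<bar> / r i powr d) \<longlongrightarrow> \<bar>a i\<bar> / r i powr 0) (at_right 0)"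
      using r[OF that] by (intro tendsto_intros) auto
    show "\<bar>a i\<bar> / r i powr 0 < 1" using a[OF that] r[OF that] by simp
  qed
  then have "\<forall>\<^sub>F d in at_right 0. (\<forall>i\<in>A. \<bar>a i\<bar> / r i powr d < 1) \<and> 0 < d \<and> d < d0"
    using \<open>finite A\<close> \<open>0 < d0\<close>
    by (intro eventually_conj eventually_ball_finite eventually_at_right_less)
      (auto simp: eventually_at_right_field intro: exI[of _ d0])
  then obtain d where d: "\<forall>i\<in>A. \<bar>a i\<bar> / r i powr d < 1" "0 < d" "d < d0"
    using eventually_happens' trivial_limit_at_right_real by blast
  define s where "s = Max (insert 0 ((\<lambda>i. \<bar>a i\<bar> / r i powr d) ` A))"
  have "s < 1" "0 \<le> s" using d(1) \<open>finite A\<close> unfolding s_def by (auto simp: Max_less_iff)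
  moreover have "\<bar>a i\<bar> \<le> s * r i powr d" if "i \<in> A" for i
  proof -
    have "\<bar>a i\<bar> / r i powr d \<le> s" unfolding s_def using that \<open>finite A\<close> by (intro Max_ge) auto
    then show ?thesis using r[OF that] by (simp add: divide_le_eq)
  qed
  ultimately show ?thesis using d by (intro exI[of _ d] exI[of _ s]) auto
qed

definition interval_map :: "(nat \<Rightarrow> real) \<Rightarrow> nat \<Rightarrow> real \<Rightarrow> real" where
  "interval_map x i y = x (i - 1) + (x i - x (i - 1)) * y"

locale self_affine =
  fixes N :: nat and x a :: "nat \<Rightarrow> real" and g :: "nat \<Rightarrow> real \<Rightarrow> real" and f :: "real \<Rightarrow> real"
    and d s K B :: real
  assumes x0: "x 0 = 0" and xN: "x N = 1"
    and x_step: "\<And>i. i \<in> {1..N} \<Longrightarrow> x (i - 1) < x i"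
    and d_pos: "0 < d" and s_nonneg: "0 \<le> s" and s_less_1: "s < 1"
    and a_le: "\<And>i. i \<in> {1..N} \<Longrightarrow> \<bar>a i\<bar> \<le> s * (x i - x (i - 1)) powr d"
    and g_holder: "\<And>i u v. i \<in> {1..N} \<Longrightarrow> u \<in> {0..1} \<Longrightarrow> v \<in> {0..1} \<Longrightarrow>
      \<bar>g i u - g i v\<bar> \<le> K * \<bar>u - v\<bar> powr d"
    and f_bounded: "\<And>u. u \<in> {0..1} \<Longrightarrow> \<bar>f u\<bar> \<le> B"
    and f_eq: "\<And>i y. i \<in> {1..N} \<Longrightarrow> y \<in> {0..1} \<Longrightarrow>
      f (interval_map x i y) = a i * f y + g i y"
begin

abbreviation L :: "nat \<Rightarrow> real \<Rightarrow> real" where "L \<equiv> interval_map x"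

abbreviation len :: "nat \<Rightarrow> real" where "len i \<equiv> x i - x (i - 1)"

lemma N_pos: "1 \<le> N"
  using x0 xN by (cases N) auto

lemma x_mono:
  assumes "i \<le> j" "j \<le> N"
  shows "x i \<le> x j"
proof (rule lift_Suc_mono_le_ivl[of "{..<N}"])
  show "x n \<le> x (Suc n)" if "n \<in> {..<N}" for n
    using x_step[of "Suc n"] that by simp
qed (use assms in auto)

lemma x_in_unit: "i \<le> N \<Longrightarrow> x i \<in> {0..1}"
  using x_mono[of 0 i] x_mono[of i N] x0 xN by simp

lemma len_pos: "i \<in> {1..N} \<Longrightarrow> 0 < len i"
  using x_step by simp

lemma len_le_1:
  assumes "i \<in> {1..N}"
  shows "len i \<le> 1"
proof -
  have "i - 1 \<le> N" "i \<le> N" using assms by auto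
  then show ?thesis using x_in_unit[of i] x_in_unit[of "i - 1"] by auto
qed

definition rmin :: real where "rmin = Min (len ` {1..N})"

lemma rmin_pos: "0 < rmin"
  unfolding rmin_def using N_pos len_pos by (subst Min_gr_iff) auto

lemma rmin_le_len: "i \<in> {1..N} \<Longrightarrow> rmin \<le> len i"
  unfolding rmin_def by simp

lemma K_nonneg: "0 \<le> K"
  using g_holder[of 1 0 1] N_pos by simp

lemma B_nonneg: "0 \<le> B"
  using f_bounded[of 0] by simp

lemma interval_map_image:
  assumes i: "i \<in> {1..N}"
  shows "L i ` {0..1} = {x (i - 1)..x i}"
proof -
  have "L i = (\<lambda>y. len i * y + x (i - 1))"
    by (auto simp: interval_map_def)
  then show ?thesis using len_pos[OF i] by (simp add: image_affinity_atLeastAtMost)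
qed

lemma diff_le_bound: "u \<in> {0..1} \<Longrightarrow> v \<in> {0..1} \<Longrightarrow> \<bar>f u - f v\<bar> \<le> 2 * B"
  using f_bounded[of u] f_bounded[of v] by linarith

lemma diff_le_rescaled:
  assumes i: "i \<in> {1..N}" and uv: "u \<in> {0..1}" "v \<in> {0..1}"
    and le: "\<bar>f u - f v\<bar> \<le> M * \<bar>u - v\<bar> powr d + e" and "0 \<le> e"
  shows "\<bar>f (L i u) - f (L i v)\<bar> \<le> (s * M + K / rmin powr d) * \<bar>L i u - L i v\<bar> powr d + s * e"
proof -
  let ?r = "len i"
  have r: "0 < ?r" "?r \<le> 1" "rmin \<le> ?r"
    using len_pos[OF i] len_le_1[OF i] rmin_le_len[OF i] by auto
  have "L i u - L i v = ?r * (u - v)"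
    by (simp add: interval_map_def algebra_simps)
  then have scale: "\<bar>L i u - L i v\<bar> powr d = ?r powr d * \<bar>u - v\<bar> powr d"
    using r by (simp add: abs_mult powr_mult)
  have "\<bar>f (L i u) - f (L i v)\<bar> = \<bar>a i * (f u - f v) + (g i u - g i v)\<bar>"
    using f_eq[OF i uv(1)] f_eq[OF i uv(2)] by (simp add: algebra_simps)
  also have "\<dots> \<le> \<bar>a i\<bar> * \<bar>f u - f v\<bar> + \<bar>g i u - g i v\<bar>"
    by (metis abs_mult abs_triangle_ineq)
  also have "\<dots> \<le> s * ?r powr d * (M * \<bar>u - v\<bar> powr d + e) + K * \<bar>u - v\<bar> powr d"
    using a_le[OF i] le g_holder[OF i uv] s_nonneg by (intro add_mono mult_mono) auto
  also have "\<dots> = s * M * \<bar>L i u - L i v\<bar> powr d + s * ?r powr d * e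
      + K / ?r powr d * \<bar>L i u - L i v\<bar> powr d"
    using scale r by (simp add: field_simps)
  also have "\<dots> \<le> s * M * \<bar>L i u - L i v\<bar> powr d + s * e
      + K / rmin powr d * \<bar>L i u - L i v\<bar> powr d"
  proof -
    have "?r powr d * e \<le> e"
      using r d_pos \<open>0 \<le> e\<close> by (intro mult_left_le_one_le powr_le1) auto
    then have "s * ?r powr d * e \<le> s * e"
      using s_nonneg by (simp add: mult.assoc mult_left_mono)
    moreover have "K / ?r powr d * \<bar>L i u - L i v\<bar> powr d \<le> K / rmin powr d * \<bar>L i u - L i v\<bar> powr d"
      using r rmin_pos d_pos K_nonneg by (intro mult_right_mono divide_left_mono powr_mono2) auto
    ultimately show ?thesis by linarith
  qed
  also have "\<dots> = (s * M + K / rmin powr d) * \<bar>L i u - L i v\<bar> powr d + s * e"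
    by (simp add: algebra_simps)
  finally show ?thesis .
qed

definition E :: real where "E = (2 * B + K) / (rmin powr d * (1 - s))"

lemma E_nonneg: "0 \<le> E"
  unfolding E_def using B_nonneg K_nonneg s_less_1 by simp

lemma two_B_le_E: "2 * B \<le> E * rmin powr d"
proof -
  have "2 * B + K \<le> (2 * B + K) / (1 - s)"
    using B_nonneg K_nonneg s_nonneg s_less_1 by (simp add: le_divide_eq mult_left_le)
  then show ?thesis
    unfolding E_def using rmin_pos K_nonneg by simp
qed

lemma E_contraction: "s * E + K / rmin powr d \<le> E"
proof -
  have "E * (1 - s) = (2 * B + K) / rmin powr d"
    unfolding E_def using rmin_pos s_less_1 by (simp add: field_simps)
  also have "\<dots> \<ge> K / rmin powr d"
    using B_nonneg rmin_pos by (intro divide_right_mono) auto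
  finally show ?thesis by (simp add: algebra_simps)
qed

lemma diff_le_far:
  assumes "u \<in> {0..1}" "v \<in> {0..1}" "rmin \<le> \<bar>u - v\<bar>"
  shows "\<bar>f u - f v\<bar> \<le> E * \<bar>u - v\<bar> powr d"
proof -
  have "\<bar>f u - f v\<bar> \<le> E * rmin powr d"
    using diff_le_bound[OF assms(1,2)] two_B_le_E by linarith
  also have "\<dots> \<le> E * \<bar>u - v\<bar> powr d"
    using assms(3) rmin_pos d_pos E_nonneg by (intro mult_left_mono powr_mono2) auto
  finally show ?thesis .
qed

lemma holder_at_endpoint:
  assumes c: "c = 0 \<or> c = 1" and t: "t \<in> {0..1}"
  shows "\<bar>f t - f c\<bar> \<le> E * \<bar>t - c\<bar> powr d"
proof -
  define i where "i = (if c = 0 then 1 else N)"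
  have i: "i \<in> {1..N}" using N_pos by (simp add: i_def)
  have c_fixed: "c \<in> {0..1}" "L i c = c"
    using c x0 xN by (auto simp: i_def interval_map_def)
  have near: "t \<in> L i ` {0..1}" if "t \<in> {0..1}" "\<bar>t - c\<bar> < rmin" for t
  proof -
    have "t \<in> {x (i - 1)..x i}"
      using that c rmin_le_len[OF i] x0 xN by (auto simp: i_def)
    then show ?thesis using interval_map_image[OF i] by simp
  qed
  have "\<bar>f t - f c\<bar> \<le> E * \<bar>t - c\<bar> powr d + 2 * B * s ^ n" if "t \<in> {0..1}" for n t
    using that
  proof (induction n arbitrary: t)
    case 0
    have "0 \<le> E * \<bar>t - c\<bar> powr d" using E_nonneg by simp
    then show ?case using diff_le_bound[OF 0 c_fixed(1)] by simp
  next
    case (Suc n)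
    show ?case
    proof (cases "\<bar>t - c\<bar> < rmin")
      case True
      then obtain t' where t': "t' \<in> {0..1}" "t = L i t'" using near Suc.prems by blast
      have "\<bar>f t - f c\<bar> = \<bar>f (L i t') - f (L i c)\<bar>" using t' c_fixed by simp
      also have "\<dots> \<le> (s * E + K / rmin powr d) * \<bar>L i t' - L i c\<bar> powr d + s * (2 * B * s ^ n)"
        using Suc.IH[OF t'(1)] t'(1) c_fixed B_nonneg s_nonneg by (intro diff_le_rescaled[OF i]) auto
      also have "\<dots> \<le> E * \<bar>t - c\<bar> powr d + 2 * B * s ^ Suc n"
        using E_contraction t' c_fixed by (auto intro: mult_right_mono)
      finally show ?thesis .
    next
      case False
      have "0 \<le> 2 * B * s ^ Suc n" using B_nonneg s_nonneg by simp
      then show ?thesis using diff_le_far[OF Suc.prems c_fixed(1)] False by linarith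
    qed
  qed
  then show ?thesis using le_of_forall_le_plus_power[OF s_nonneg s_less_1] t by blast
qed

lemma holder_at_interval_end:
  assumes i: "i \<in> {1..N}" and w: "w \<in> {x (i - 1)..x i}" and c: "c = 0 \<or> c = 1"
  shows "\<bar>f w - f (L i c)\<bar> \<le> E * \<bar>w - L i c\<bar> powr d"
proof -
  obtain w' where w': "w' \<in> {0..1}" "w = L i w'"
    using w interval_map_image[OF i] by blast
  have c01: "c \<in> {0..1}" using c by auto
  have "\<bar>f w - f (L i c)\<bar> \<le> (s * E + K / rmin powr d) * \<bar>w - L i c\<bar> powr d + s * 0"
    unfolding w'(2) using holder_at_endpoint[OF c w'(1)] by (intro diff_le_rescaled[OF i w'(1) c01]) auto
  also have "\<dots> \<le> E * \<bar>w - L i c\<bar> powr d"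
    using E_contraction by (auto intro: mult_right_mono)
  finally show ?thesis .
qed

lemma holder_at_node:
  assumes j: "j \<le> N" and w: "w \<in> {0..1}"
  shows "\<bar>f w - f (x j)\<bar> \<le> E * \<bar>w - x j\<bar> powr d"
proof -
  consider "rmin \<le> \<bar>w - x j\<bar>" | "w \<le> x j" "x j - w < rmin" | "x j < w" "w - x j < rmin"
    by linarith
  then show ?thesis
  proof cases
    case 1
    then show ?thesis using diff_le_far w x_in_unit[OF j] by blast
  next
    case 2
    show ?thesis
    proof (cases "j = 0")
      case True
      then show ?thesis using 2 w x0 by simp
    next
      case False
      then have j': "j \<in> {1..N}" using j by auto
      have "w \<in> {x (j - 1)..x j}" using 2 rmin_le_len[OF j'] by auto
      then show ?thesis using holder_at_interval_end[OF j', of w 1] by (simp add: interval_map_def)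
    qed
  next
    case 3
    then have j': "Suc j \<in> {1..N}" using j w xN by (cases "j = N") auto
    have "w \<in> {x j..x (Suc j)}" using 3 rmin_le_len[OF j'] by auto
    then show ?thesis using holder_at_interval_end[OF j', of w 0] by (simp add: interval_map_def)
  qed
qed

lemma diff_le_across_node:
  assumes j: "j \<le> N" and uv: "u \<in> {0..1}" "v \<in> {0..1}" and between: "u \<le> x j" "x j \<le> v"
  shows "\<bar>f u - f v\<bar> \<le> 2 * E * \<bar>u - v\<bar> powr d"
proof -
  have "\<bar>f u - f v\<bar> \<le> \<bar>f u - f (x j)\<bar> + \<bar>f v - f (x j)\<bar>" by linarith
  also have "\<dots> \<le> E * \<bar>u - x j\<bar> powr d + E * \<bar>v - x j\<bar> powr d"
    using holder_at_node[OF j] uv by (intro add_mono) auto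
  also have "\<dots> \<le> E * \<bar>u - v\<bar> powr d + E * \<bar>u - v\<bar> powr d"
    using between E_nonneg d_pos by (intro add_mono mult_left_mono powr_mono2) auto
  finally show ?thesis by (simp add: algebra_simps)
qed

lemma exists_interval:
  assumes "u \<in> {0..1}"
  shows "\<exists>i\<in>{1..N}. u \<in> {x (i - 1)..x i}"
proof -
  define P where "P i \<longleftrightarrow> 1 \<le> i \<and> u \<le> x i" for i
  define i where "i = (LEAST i. P i)"
  have N: "P N" unfolding P_def using N_pos assms xN by simp
  have i: "1 \<le> i \<and> u \<le> x i" using LeastI[of P, OF N] unfolding P_def i_def .
  have "i \<le> N" using Least_le[of P, OF N] unfolding i_def .
  have "x (i - 1) \<le> u"
  proof (cases "i = 1")
    case True
    then show ?thesis using x0 assms by simp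
  next
    case False
    have "i - 1 < i" using i by simp
    then have "\<not> P (i - 1)"
      unfolding i_def by (rule not_less_Least)
    then show ?thesis using i False unfolding P_def by auto
  qed
  then show ?thesis using i \<open>i \<le> N\<close> by auto
qed

theorem holder_estimate:
  assumes "u \<in> {0..1}" "v \<in> {0..1}"
  shows "\<bar>f u - f v\<bar> \<le> 2 * E * \<bar>u - v\<bar> powr d"
proof -
  have "\<forall>u\<in>{0..1}. \<forall>v\<in>{0..1}. \<bar>f u - f v\<bar> \<le> 2 * E * \<bar>u - v\<bar> powr d + 2 * B * s ^ n" for n
  proof (induction n)
    case 0
    have "0 \<le> 2 * E * \<bar>u - v\<bar> powr d" for u v using E_nonneg by simp
    then show ?case using diff_le_bound by (simp add: add_increasing)
  next
    case (Suc n)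
    have err: "0 \<le> 2 * B * s ^ Suc n" using B_nonneg s_nonneg by simp
    show ?case
    proof (intro ballI)
      fix u v :: real assume u: "u \<in> {0..1}" and v: "v \<in> {0..1}"
      obtain i where i: "i \<in> {1..N}" and ui: "u \<in> {x (i - 1)..x i}"
        using exists_interval[OF u] by blast
      consider "v \<in> {x (i - 1)..x i}" | "x i < v" | "v < x (i - 1)" by force
      then show "\<bar>f u - f v\<bar> \<le> 2 * E * \<bar>u - v\<bar> powr d + 2 * B * s ^ Suc n"
      proof cases
        case 1
        obtain u' v' where u': "u' \<in> {0..1}" "u = L i u'" and v': "v' \<in> {0..1}" "v = L i v'"
          using ui 1 interval_map_image[OF i] by (metis imageE)
        have "\<bar>f u - f v\<bar> \<le> (s * (2 * E) + K / rmin powr d) * \<bar>u - v\<bar> powr d + s * (2 * B * s ^ n)"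
          unfolding u'(2) v'(2) using Suc.IH u'(1) v'(1) B_nonneg s_nonneg
          by (intro diff_le_rescaled[OF i]) auto
        also have "\<dots> \<le> 2 * E * \<bar>u - v\<bar> powr d + 2 * B * s ^ Suc n"
        proof -
          have "0 \<le> K / rmin powr d" "s * (2 * E) = 2 * (s * E)" using K_nonneg by auto
          then have "s * (2 * E) + K / rmin powr d \<le> 2 * E" using E_contraction by linarith
          from mult_right_mono[OF this, of "\<bar>u - v\<bar> powr d"] show ?thesis by (simp add: mult_ac)
        qed
        finally show ?thesis .
      next
        case 2
        then show ?thesis using diff_le_across_node[of i u v] i ui u v err by auto
      next
        case 3
        then have "\<bar>f v - f u\<bar> \<le> 2 * E * \<bar>v - u\<bar> powr d"
          using diff_le_across_node[of "i - 1" v u] i ui u v by auto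
        then show ?thesis using err by (simp add: abs_minus_commute)
      qed
    qed
  qed
  then show ?thesis using le_of_forall_le_plus_power[OF s_nonneg s_less_1] assms by blast
qed

lemma Lip_on_I: "Lip_on_I d f"
  unfolding Lip_on_I_def using holder_estimate by blast

end

lemma Lip_on_I_self_affine:
  fixes N :: nat and x a :: "nat \<Rightarrow> real" and g :: "nat \<Rightarrow> real \<Rightarrow> real" and f :: "real \<Rightarrow> real"
  assumes x0: "x 0 = 0" and xN: "x N = 1"
    and x_step: "\<And>i. i \<in> {1..N} \<Longrightarrow> x (i - 1) < x i"
    and "0 < d" "0 \<le> s" "s < 1"
    and a_le: "\<And>i. i \<in> {1..N} \<Longrightarrow> \<bar>a i\<bar> \<le> s * (x i - x (i - 1)) powr d"
    and g_Lip: "\<And>i. i \<in> {1..N} \<Longrightarrow> Lip_on_I d (g i)"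
    and f_bounded: "bounded (f ` {0..1})"
    and f_eq: "\<And>i y. i \<in> {1..N} \<Longrightarrow> y \<in> {0..1} \<Longrightarrow>
      f (interval_map x i y) = a i * f y + g i y"
  shows "Lip_on_I d f"
proof -
  obtain K where K: "\<forall>i\<in>{1..N}. \<forall>u\<in>{0..1}. \<forall>v\<in>{0..1}. \<bar>g i u - g i v\<bar> \<le> K * \<bar>u - v\<bar> powr d"
    using Lip_on_I_uniform_const[of "{1..N}" d g] g_Lip by blast
  obtain B where "\<And>u. u \<in> {0..1} \<Longrightarrow> \<bar>f u\<bar> \<le> B"
    using f_bounded unfolding bounded_iff by (auto simp del: atLeastAtMost_iff)
  then interpret self_affine N x a g f d s K B
    using assms K by unfold_locales auto
  show ?thesis by (rule Lip_on_I)
qed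

lemma exists_exponent_Lip_on_I_self_affine:
  fixes N :: nat and x a :: "nat \<Rightarrow> real" and g :: "nat \<Rightarrow> real \<Rightarrow> real" and f :: "real \<Rightarrow> real"
  assumes x0: "x 0 = 0" and xN: "x N = 1"
    and x_step: "\<And>i. i \<in> {1..N} \<Longrightarrow> x (i - 1) < x i"
    and "0 < d0"
    and a_lt: "\<And>i. i \<in> {1..N} \<Longrightarrow> \<bar>a i\<bar> < 1"
    and g_Lip: "\<And>i. i \<in> {1..N} \<Longrightarrow> Lip_on_I d0 (g i)"
    and f_bounded: "bounded (f ` {0..1})"
    and f_eq: "\<And>i y. i \<in> {1..N} \<Longrightarrow> y \<in> {0..1} \<Longrightarrow>
      f (interval_map x i y) = a i * f y + g i y"
  shows "\<exists>d. 0 < d \<and> d \<le> d0 \<and> Lip_on_I d f"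
proof -
  obtain d s where d: "0 < d" "d \<le> d0" "0 \<le> s" "s < 1"
    and a_le: "\<forall>i\<in>{1..N}. \<bar>a i\<bar> \<le> s * (x i - x (i - 1)) powr d"
    using exists_exponent_contraction[of "{1..N}" a "\<lambda>i. x i - x (i - 1)" d0]
      a_lt x_step \<open>0 < d0\<close> by auto
  have "Lip_on_I d f"
  proof (rule Lip_on_I_self_affine[OF x0 xN x_step d(1,3,4) _ _ f_bounded f_eq])
    show "Lip_on_I d (g i)" if "i \<in> {1..N}" for i
      using g_Lip[OF that] d(2) by (rule Lip_on_I_mono_exponent)
  qed (use a_le in auto)
  with d show ?thesis by blast
qed

theorem theorem3p1:
  fixes N :: nat and x :: "nat \<Rightarrow> real"
    and \<alpha> \<beta> \<gamma> lam_i mu_i :: "nat \<Rightarrow> real"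
    and p q :: "nat \<Rightarrow> real \<Rightarrow> real"
    and f1 f2 :: "real \<Rightarrow> real"
    and L :: "nat \<Rightarrow> real \<Rightarrow> real"
    and lam mu Omega Gamma Theta :: real
  assumes N: "N \<ge> 2"
    and x0: "x 0 = 0" and xN: "x N = 1"
    and xmono: "\<And>i. i \<in> {1..N} \<Longrightarrow> x (i - 1) < x i"
    and L_def: "\<And>i y. L i y = x (i - 1) + (x i - x (i - 1)) * y"
    and alpha: "\<And>i. i \<in> {1..N} \<Longrightarrow> \<bar>\<alpha> i\<bar> < 1"
    and betagamma: "\<And>i. i \<in> {1..N} \<Longrightarrow> \<bar>\<beta> i\<bar> + \<bar>\<gamma> i\<bar> < 1"
    and lam_bounds: "\<And>i. i \<in> {1..N} \<Longrightarrow> 0 < lam_i i \<and> lam_i i \<le> 1"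
    and mu_bounds: "\<And>i. i \<in> {1..N} \<Longrightarrow> 0 < mu_i i \<and> mu_i i \<le> 1"
    and p_lip: "\<And>i. i \<in> {1..N} \<Longrightarrow> Lip_on_I (lam_i i) (p i)"
    and q_lip: "\<And>i. i \<in> {1..N} \<Longrightarrow> Lip_on_I (mu_i i) (q i)"
    and f1_cont: "continuous_on {0..1} f1"
    and f2_cont: "continuous_on {0..1} f2"
    and eq1: "\<And>i y. i \<in> {1..N} \<Longrightarrow> y \<in> {0..1} \<Longrightarrow>
               f1 (L i y) = \<alpha> i * f1 y + \<beta> i * f2 y + p i y"
    and eq2: "\<And>i y. i \<in> {1..N} \<Longrightarrow> y \<in> {0..1} \<Longrightarrow>
               f2 (L i y) = \<gamma> i * f2 y + q i y"
    and lam_def: "lam = Min (lam_i ` {1..N})"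
    and mu_def: "mu = Min (mu_i ` {1..N})"
    and Omega_def: "Omega = Max ((\<lambda>i. \<bar>\<alpha> i\<bar> / (x i - x (i - 1)) powr lam) ` {1..N})"
    and Gamma_def: "Gamma = Max ((\<lambda>i. \<bar>\<gamma> i\<bar> / (x i - x (i - 1)) powr mu) ` {1..N})"
    and Theta_def: "Theta = Max ((\<lambda>i. \<bar>\<alpha> i\<bar> / (x i - x (i - 1)) powr mu) ` {1..N})"
    and Theta_lt1: "Theta < 1"
  shows "(Omega \<noteq> 1 \<and> Gamma \<noteq> 1 \<longrightarrow> (\<exists>\<delta>. 0 < \<delta> \<and> \<delta> \<le> 1 \<and> Lip_on_I \<delta> f1))
       \<and> (Omega = 1 \<or> Gamma = 1 \<longrightarrow> (\<exists>\<delta>. 0 < \<delta> \<and> \<delta> \<le> 1 \<and>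
            modcont f1 \<in> O[at 0](\<lambda>t. \<bar>t\<bar> powr \<delta> * ln \<bar>t\<bar>)))"
proof -
  have L_eq: "L = interval_map x"
    by (intro ext) (simp add: L_def interval_map_def)
  have lam_le: "lam \<le> lam_i i" and mu_le: "mu \<le> mu_i i" if "i \<in> {1..N}" for i
    using that by (simp_all add: lam_def mu_def)
  have "0 < lam" "0 < mu"
    using N lam_bounds mu_bounds by (simp_all add: lam_def mu_def Min_gr_iff)
  have "lam \<le> 1"
    using lam_le[of 1] lam_bounds[of 1] N by simp
  have "\<exists>d2. 0 < d2 \<and> d2 \<le> mu \<and> Lip_on_I d2 f2"
  proof (rule exists_exponent_Lip_on_I_self_affine[OF x0 xN xmono \<open>0 < mu\<close>])
    show "\<bar>\<gamma> i\<bar> < 1" if "i \<in> {1..N}" for i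
      using betagamma[OF that] by linarith
    show "Lip_on_I mu (q i)" if "i \<in> {1..N}" for i
      using q_lip[OF that] mu_le[OF that] by (rule Lip_on_I_mono_exponent)
    show "bounded (f2 ` {0..1})"
      by (intro compact_imp_bounded compact_continuous_image f2_cont) simp
  qed (use eq2 L_eq in auto)
  then obtain d2 where "0 < d2" and f2_Lip: "Lip_on_I d2 f2" by blast
  have "\<exists>d. 0 < d \<and> d \<le> min d2 lam \<and> Lip_on_I d f1"
  proof (rule exists_exponent_Lip_on_I_self_affine[OF x0 xN xmono])
    show "Lip_on_I (min d2 lam) (\<lambda>y. \<beta> i * f2 y + p i y)" if "i \<in> {1..N}" for i
      using f2_Lip p_lip[OF that] lam_le[OF that]
      by (intro Lip_on_I_add Lip_on_I_cmult) (auto intro: Lip_on_I_mono_exponent)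
    show "bounded (f1 ` {0..1})"
      by (intro compact_imp_bounded compact_continuous_image f1_cont) simp
  qed (use \<open>0 < d2\<close> \<open>0 < lam\<close> alpha eq1 L_eq in \<open>auto simp: add.assoc\<close>)
  then obtain d where "0 < d" "d \<le> 1" and f1_Lip: "Lip_on_I d f1"
    using \<open>lam \<le> 1\<close> by auto
  then show ?thesis
    using Lip_on_I_imp_modcont_bigo[OF f1_Lip] by auto
qed

end
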